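(* For all positive integers $t,s$, the complete bipartite graph $K_{4t,4s+2}$ has an almost 2-perfect 8-cycle decomposition.
   Context: An 8-cycle decomposition of a graph $G$ is a collection of pairwise edge-disjoint 8-cycles in $G$ whose edge sets partition $E(G)$. For an 8-cycle $C$, an inside 8-cycle of $C$ is an 8-cycle on the same vertex set as $C$ sharing no edge with $C$. An 8-cycle decomposition $\mathcal{C}$ of $G$ is almost 2-perfect (A2P) if one can choose, for each $C\in\mathcal{C}$, an inside 8-cycle $C'$ of $C$ with all edges in $G$, such that the chosen cycles $\{C'\}$ again form an 8-cycle decomposition of $G$. *)

theory Defs
  imports Main
begin

(* Graphs are given by their edge sets; an edge is a 2-element set of vertices. *)

definition cycle_edges :: "'a list \<Rightarrow> 'a set set" where
  "cycle_edges vs = {{vs ! i, vs ! ((i + 1) mod length vs)} | i. i < length vs}"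

definition is_8cycle :: "'a set set \<Rightarrow> bool" where
  "is_8cycle C \<longleftrightarrow> (\<exists>vs. length vs = 8 \<and> distinct vs \<and> C = cycle_edges vs)"

definition cyc_verts :: "'a set set \<Rightarrow> 'a set" where
  "cyc_verts C = \<Union>C"

definition is_8cycle_decomp :: "'a set set \<Rightarrow> 'a set set set \<Rightarrow> bool" where
  "is_8cycle_decomp E \<C> \<longleftrightarrow>
     (\<forall>C\<in>\<C>. is_8cycle C \<and> C \<subseteq> E) \<and>
     (\<forall>C\<in>\<C>. \<forall>D\<in>\<C>. C \<noteq> D \<longrightarrow> C \<inter> D = {}) \<and>
     \<Union>\<C> = E"

definition inside_8cycle :: "'a set set \<Rightarrow> 'a set set \<Rightarrow> bool" where
  "inside_8cycle C C' \<longleftrightarrow> is_8cycle C' \<and> cyc_verts C' = cyc_verts C \<and> C \<inter> C' = {}"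

definition is_A2P_8cycle_decomp :: "'a set set \<Rightarrow> 'a set set set \<Rightarrow> bool" where
  "is_A2P_8cycle_decomp E \<C> \<longleftrightarrow>
     is_8cycle_decomp E \<C> \<and>
     (\<exists>f. (\<forall>C\<in>\<C>. inside_8cycle C (f C) \<and> f C \<subseteq> E) \<and>
          (\<forall>C\<in>\<C>. \<forall>D\<in>\<C>. C \<noteq> D \<longrightarrow> f C \<inter> f D = {}) \<and>
          \<Union>(f ` \<C>) = E)"

definition complete_bipartite :: "nat \<Rightarrow> nat \<Rightarrow> (nat + nat) set set" where
  "complete_bipartite m n = {{Inl i, Inr j} | i j. i < m \<and> j < n}"

end

theory Submission
  imports Defs "HOL-Library.Disjoint_Sets"
begin

(* A2P decompositions of edge-disjoint graphs combine into one of their union, and an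
   injective relabelling of the vertices carries them along. Hence K(m+k, n) and K(m, n+k)
   inherit A2P decompositions from K(m, n), K(k, n) and K(m, k), and K(4t, 4s+2) is assembled
   from copies of K(4,4) and K(4,6). For K(4,4) two edge-disjoint Hamiltonian 8-cycles serve
   as each other's inside cycle; K(4,6) splits into three 8-cycles, each on four columns, and
   three further 8-cycles on the same column sets form a second decomposition. *)

section \<open>Relabelling and disjoint unions of A2P decompositions\<close>

lemma cycle_edges_eq_image:
  "cycle_edges vs = (\<lambda>i. {vs ! i, vs ! ((i + 1) mod length vs)}) ` {..<length vs}"
  unfolding cycle_edges_def by auto

lemma cycle_edges_map: "cycle_edges (map g vs) = image g ` cycle_edges vs"
proof -
  have "{map g vs ! i, map g vs ! ((i + 1) mod length vs)} = g ` {vs ! i, vs ! ((i + 1) mod length vs)}"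
    if "i < length vs" for i
  proof -
    have "(i + 1) mod length vs < length vs" using that by (auto intro: mod_less_divisor)
    then show ?thesis using that by simp
  qed
  then show ?thesis
    unfolding cycle_edges_eq_image length_map image_image by (auto intro: image_cong)
qed

lemma is_8cycle_nonempty: "is_8cycle C \<Longrightarrow> C \<noteq> {}"
  unfolding is_8cycle_def cycle_edges_def by force

lemma is_8cycle_image:
  assumes "inj g" "is_8cycle C"
  shows "is_8cycle (image g ` C)"
  using assms unfolding is_8cycle_def
  by (metis cycle_edges_map distinct_map inj_on_subset length_map subset_UNIV)

lemma inside_8cycle_image:
  assumes "inj g" "inside_8cycle C C'"
  shows "inside_8cycle (image g ` C) (image g ` C')"
proof -
  have "inj (image g)" using assms(1) by (simp add: inj_on_image)
  then show ?thesis
    using assms unfolding inside_8cycle_def cyc_verts_def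
    by (simp add: is_8cycle_image image_Int[symmetric] image_Union[symmetric])
qed

lemma is_8cycle_decomp_iff_partition_on:
  "is_8cycle_decomp E Cs \<longleftrightarrow> partition_on E Cs \<and> (\<forall>C\<in>Cs. is_8cycle C)"
  unfolding is_8cycle_decomp_def partition_on_def disjoint_def
  by (blast dest: is_8cycle_nonempty)

lemma partition_on_Un:
  "partition_on A P \<Longrightarrow> partition_on B Q \<Longrightarrow> A \<inter> B = {} \<Longrightarrow> partition_on (A \<union> B) (P \<union> Q)"
  unfolding partition_on_def by (auto intro: disjoint_union)

lemma partition_on_disjoint:
  assumes "partition_on A P" "partition_on B Q" "A \<inter> B = {}"
  shows "P \<inter> Q = {}"
proof (rule equals0I)
  fix C assume "C \<in> P \<inter> Q"
  then have "C \<subseteq> A \<inter> B" using partition_onD1[OF assms(1)] partition_onD1[OF assms(2)] by blast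
  with \<open>C \<in> P \<inter> Q\<close> show False using assms(3) partition_onD3[OF assms(1)] by auto
qed

lemma is_8cycle_decomp_Un:
  "is_8cycle_decomp E1 Cs1 \<Longrightarrow> is_8cycle_decomp E2 Cs2 \<Longrightarrow> E1 \<inter> E2 = {}
    \<Longrightarrow> is_8cycle_decomp (E1 \<union> E2) (Cs1 \<union> Cs2)"
  by (auto simp: is_8cycle_decomp_iff_partition_on intro: partition_on_Un)

lemma is_8cycle_decomp_singleton: "is_8cycle C \<Longrightarrow> is_8cycle_decomp C {C}"
  unfolding is_8cycle_decomp_def by simp

lemma is_8cycle_decomp_insert:
  assumes "is_8cycle C" "C \<inter> E = {}" "is_8cycle_decomp E Cs"
  shows "is_8cycle_decomp (C \<union> E) (insert C Cs)"
  unfolding insert_is_Un[of C Cs]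
  by (rule is_8cycle_decomp_Un[OF is_8cycle_decomp_singleton[OF assms(1)] assms(3,2)])

lemma is_8cycle_decomp_image:
  assumes "inj g" "is_8cycle_decomp E Cs"
  shows "is_8cycle_decomp (image g ` E) (image (image g) ` Cs)"
proof -
  have "inj (image g)" using assms(1) by (simp add: inj_on_image)
  then have "partition_on (image g ` E) (image (image g) ` Cs - {{}})"
    using assms(2) unfolding is_8cycle_decomp_iff_partition_on
    by (blast intro: partition_on_inj_image inj_on_subset)
  moreover have "{} \<notin> image (image g) ` Cs"
    using assms(2) unfolding is_8cycle_decomp_iff_partition_on partition_on_def by blast
  ultimately show ?thesis
    using assms unfolding is_8cycle_decomp_iff_partition_on by (auto simp: is_8cycle_image)
qed

lemma inj_on_of_disjoint_nonempty:
  assumes "\<forall>C\<in>Cs. f C \<noteq> {}" "\<forall>C\<in>Cs. \<forall>D\<in>Cs. C \<noteq> D \<longrightarrow> f C \<inter> f D = {}"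
  shows "inj_on f Cs"
proof (rule inj_onI, rule ccontr)
  fix C D assume "C \<in> Cs" "D \<in> Cs" "f C = f D" "C \<noteq> D"
  with assms(2) have "f C = {}" by fastforce
  with assms(1) \<open>C \<in> Cs\<close> show False by blast
qed

text \<open>The inside cycles are nonempty, so choosing them pairwise edge-disjoint amounts to an
  injective choice whose image is again an 8-cycle decomposition.\<close>

lemma is_A2P_8cycle_decomp_iff:
  "is_A2P_8cycle_decomp E Cs \<longleftrightarrow> is_8cycle_decomp E Cs \<and>
     (\<exists>f. (\<forall>C\<in>Cs. inside_8cycle C (f C)) \<and> inj_on f Cs \<and> is_8cycle_decomp E (f ` Cs))"
proof -
  have "(\<forall>C\<in>Cs. inside_8cycle C (f C) \<and> f C \<subseteq> E) \<and>
          (\<forall>C\<in>Cs. \<forall>D\<in>Cs. C \<noteq> D \<longrightarrow> f C \<inter> f D = {}) \<and> \<Union>(f ` Cs) = E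
    \<longleftrightarrow> (\<forall>C\<in>Cs. inside_8cycle C (f C)) \<and> inj_on f Cs \<and> is_8cycle_decomp E (f ` Cs)"
    for f
  proof (intro iffI; elim conjE)
    assume inside: "\<forall>C\<in>Cs. inside_8cycle C (f C) \<and> f C \<subseteq> E"
      and disjoint: "\<forall>C\<in>Cs. \<forall>D\<in>Cs. C \<noteq> D \<longrightarrow> f C \<inter> f D = {}" and cover: "\<Union>(f ` Cs) = E"
    have cycle: "is_8cycle (f C)" if "C \<in> Cs" for C
      using inside that unfolding inside_8cycle_def by blast
    then have inj: "inj_on f Cs"
      using disjoint is_8cycle_nonempty by (blast intro: inj_on_of_disjoint_nonempty)
    have "\<forall>X\<in>f ` Cs. \<forall>Y\<in>f ` Cs. X \<noteq> Y \<longrightarrow> X \<inter> Y = {}"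
    proof (intro ballI impI)
      fix X Y assume "X \<in> f ` Cs" "Y \<in> f ` Cs" "X \<noteq> Y"
      then obtain C D where CD: "C \<in> Cs" "D \<in> Cs" "X = f C" "Y = f D" by blast
      with \<open>X \<noteq> Y\<close> have "C \<noteq> D" by blast
      then show "X \<inter> Y = {}" using disjoint CD by simp
    qed
    moreover have "\<forall>X\<in>f ` Cs. is_8cycle X \<and> X \<subseteq> E"
      using inside cycle by auto
    ultimately have "is_8cycle_decomp E (f ` Cs)"
      unfolding is_8cycle_decomp_def using cover by blast
    with inj show "(\<forall>C\<in>Cs. inside_8cycle C (f C)) \<and> inj_on f Cs \<and> is_8cycle_decomp E (f ` Cs)"
      using inside by simp
  next
    assume inside: "\<forall>C\<in>Cs. inside_8cycle C (f C)" and inj: "inj_on f Cs"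
      and decomp: "is_8cycle_decomp E (f ` Cs)"
    have "\<forall>C\<in>Cs. \<forall>D\<in>Cs. C \<noteq> D \<longrightarrow> f C \<inter> f D = {}"
    proof (intro ballI impI)
      fix C D assume "C \<in> Cs" "D \<in> Cs" "C \<noteq> D"
      then have "f C \<noteq> f D" using inj by (auto dest: inj_onD)
      with \<open>C \<in> Cs\<close> \<open>D \<in> Cs\<close> show "f C \<inter> f D = {}"
        using decomp unfolding is_8cycle_decomp_def by blast
    qed
    moreover have "\<forall>C\<in>Cs. f C \<subseteq> E" "\<Union>(f ` Cs) = E"
      using decomp by (simp_all add: is_8cycle_decomp_def)
    ultimately show "(\<forall>C\<in>Cs. inside_8cycle C (f C) \<and> f C \<subseteq> E) \<and>
          (\<forall>C\<in>Cs. \<forall>D\<in>Cs. C \<noteq> D \<longrightarrow> f C \<inter> f D = {}) \<and> \<Union>(f ` Cs) = E"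
      using inside by simp
  qed
  then show ?thesis unfolding is_A2P_8cycle_decomp_def by simp
qed

lemma is_A2P_8cycle_decomp_Un:
  assumes A1: "is_A2P_8cycle_decomp E1 Cs1" and A2: "is_A2P_8cycle_decomp E2 Cs2"
    and disj: "E1 \<inter> E2 = {}"
  shows "is_A2P_8cycle_decomp (E1 \<union> E2) (Cs1 \<union> Cs2)"
proof -
  obtain f1 where f1: "\<forall>C\<in>Cs1. inside_8cycle C (f1 C)" "inj_on f1 Cs1" "is_8cycle_decomp E1 (f1 ` Cs1)"
    and D1: "is_8cycle_decomp E1 Cs1"
    using A1 unfolding is_A2P_8cycle_decomp_iff by blast
  obtain f2 where f2: "\<forall>C\<in>Cs2. inside_8cycle C (f2 C)" "inj_on f2 Cs2" "is_8cycle_decomp E2 (f2 ` Cs2)"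
    and D2: "is_8cycle_decomp E2 Cs2"
    using A2 unfolding is_A2P_8cycle_decomp_iff by blast
  define f where "f C = (if C \<in> Cs1 then f1 C else f2 C)" for C
  have "Cs1 \<inter> Cs2 = {}"
    using D1 D2 partition_on_disjoint[OF _ _ disj] unfolding is_8cycle_decomp_iff_partition_on by blast
  then have image_f: "f ` (Cs1 \<union> Cs2) = f1 ` Cs1 \<union> f2 ` Cs2"
    unfolding f_def image_Un by (intro arg_cong2[where f="(\<union>)"] image_cong) auto
  have "inj_on f (Cs1 \<union> Cs2)"
  proof -
    have "f1 ` Cs1 \<inter> f2 ` Cs2 = {}"
      using f1(3) f2(3) partition_on_disjoint[OF _ _ disj]
      unfolding is_8cycle_decomp_iff_partition_on by blast
    then show ?thesis
      using f1(2) f2(2) unfolding f_def inj_on_def by (metis Int_iff Un_iff empty_iff image_eqI)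
  qed
  moreover have "\<forall>C\<in>Cs1 \<union> Cs2. inside_8cycle C (f C)"
    using f1(1) f2(1) by (auto simp: f_def)
  ultimately show ?thesis
    unfolding is_A2P_8cycle_decomp_iff
    using is_8cycle_decomp_Un[OF D1 D2 disj] is_8cycle_decomp_Un[OF f1(3) f2(3) disj]
    by (metis image_f)
qed

lemma is_A2P_8cycle_decomp_image:
  assumes g: "inj g" and A: "is_A2P_8cycle_decomp E Cs"
  shows "is_A2P_8cycle_decomp (image g ` E) (image (image g) ` Cs)"
proof -
  define H :: "'a set set \<Rightarrow> 'b set set" where "H = image (image g)"
  have "inj H" unfolding H_def using g by (simp add: inj_on_image)
  obtain f where f: "\<forall>C\<in>Cs. inside_8cycle C (f C)" "inj_on f Cs" "is_8cycle_decomp E (f ` Cs)"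
    and D: "is_8cycle_decomp E Cs"
    using A unfolding is_A2P_8cycle_decomp_iff by blast
  define F where "F = H \<circ> f \<circ> inv H"
  have FH: "F \<circ> H = H \<circ> f" using \<open>inj H\<close> by (simp add: F_def fun_eq_iff)
  have "\<forall>X\<in>H ` Cs. inside_8cycle X (F X)"
    using f(1) inside_8cycle_image[OF g] FH unfolding H_def by (simp add: fun_eq_iff)
  moreover have "inj_on F (H ` Cs)"
    using FH comp_inj_on[OF f(2) inj_on_subset[OF \<open>inj H\<close> subset_UNIV]]
    by (intro inj_on_imageI) simp
  moreover have "is_8cycle_decomp (H E) (F ` H ` Cs)"
    using is_8cycle_decomp_image[OF g f(3)] FH unfolding H_def by (simp add: image_comp)
  ultimately show ?thesis
    using is_8cycle_decomp_image[OF g D]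
    unfolding is_A2P_8cycle_decomp_iff H_def by blast
qed

definition has_A2P_8cycle_decomp :: "'a set set \<Rightarrow> bool" where
  "has_A2P_8cycle_decomp E \<longleftrightarrow> (\<exists>Cs. is_A2P_8cycle_decomp E Cs)"

lemma has_A2P_8cycle_decomp_empty: "has_A2P_8cycle_decomp {}"
  unfolding has_A2P_8cycle_decomp_def is_A2P_8cycle_decomp_def is_8cycle_decomp_def by auto

lemma has_A2P_8cycle_decomp_Un:
  "has_A2P_8cycle_decomp E1 \<Longrightarrow> has_A2P_8cycle_decomp E2 \<Longrightarrow> E1 \<inter> E2 = {}
    \<Longrightarrow> has_A2P_8cycle_decomp (E1 \<union> E2)"
  unfolding has_A2P_8cycle_decomp_def using is_A2P_8cycle_decomp_Un by blast

lemma has_A2P_8cycle_decomp_image: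
  "inj g \<Longrightarrow> has_A2P_8cycle_decomp E \<Longrightarrow> has_A2P_8cycle_decomp (image g ` E)"
  unfolding has_A2P_8cycle_decomp_def using is_A2P_8cycle_decomp_image by blast

lemma has_A2P_8cycle_decomp_pair:
  assumes "is_8cycle C" "is_8cycle D" "C \<inter> D = {}" "cyc_verts C = cyc_verts D"
  shows "has_A2P_8cycle_decomp (C \<union> D)"
proof -
  have decomp: "is_8cycle_decomp (C \<union> D) {C, D}"
    using is_8cycle_decomp_insert[OF assms(1,3) is_8cycle_decomp_singleton[OF assms(2)]] .
  have "C \<noteq> D" using assms(1,3) is_8cycle_nonempty by fastforce
  define f where "f X = (if X = C then D else C)" for X
  have "f ` {C, D} = {C, D}" "inj_on f {C, D}" using \<open>C \<noteq> D\<close> by (auto simp: f_def)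
  moreover have "\<forall>X\<in>{C, D}. inside_8cycle X (f X)"
    using assms \<open>C \<noteq> D\<close> unfolding inside_8cycle_def f_def by (auto simp: Int_commute)
  ultimately show ?thesis
    unfolding has_A2P_8cycle_decomp_def is_A2P_8cycle_decomp_iff using decomp by metis
qed

section \<open>Complete bipartite graphs\<close>

definition bip_edges :: "(nat \<times> nat) set \<Rightarrow> (nat + nat) set set" where
  "bip_edges P = (\<lambda>(i, j). {Inl i, Inr j}) ` P"

lemma inj_bip_edge: "inj (\<lambda>(i, j). {Inl i, Inr j} :: (nat + nat) set)"
  by (auto simp: inj_def doubleton_eq_iff)

lemma bip_edges_Int: "bip_edges P \<inter> bip_edges Q = bip_edges (P \<inter> Q)"
  unfolding bip_edges_def by (simp add: image_Int[OF inj_bip_edge])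

lemma bip_edges_Un: "bip_edges P \<union> bip_edges Q = bip_edges (P \<union> Q)"
  unfolding bip_edges_def by (rule image_Un[symmetric])

lemma bip_edges_eq_iff: "bip_edges P = bip_edges Q \<longleftrightarrow> P = Q"
  unfolding bip_edges_def by (rule inj_image_eq_iff[OF inj_bip_edge])

lemma bip_edges_empty_iff: "bip_edges P = {} \<longleftrightarrow> P = {}"
  unfolding bip_edges_def by simp

lemma image_map_sum_bip_edges: "image (map_sum f g) ` bip_edges P = bip_edges (map_prod f g ` P)"
  unfolding bip_edges_def image_image by (simp add: case_prod_unfold)

lemma complete_bipartite_eq_bip_edges: "complete_bipartite m n = bip_edges ({..<m} \<times> {..<n})"
  unfolding complete_bipartite_def bip_edges_def by auto

lemma complete_bipartite_0: "complete_bipartite 0 n = {}"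
  unfolding complete_bipartite_def by simp

lemma lessThan_add_eq: "{..<m + k} = {..<m} \<union> (+) m ` {..<k :: nat}"
proof -
  have "(+) m ` {..<k} = {m..<m + k}"
    by (simp add: atLeast0LessThan[symmetric] add.commute)
  then show ?thesis by (simp add: ivl_disj_un_one(2))
qed

lemma has_A2P_complete_bipartite_add_rows:
  assumes "has_A2P_8cycle_decomp (complete_bipartite m n)" "has_A2P_8cycle_decomp (complete_bipartite k n)"
  shows "has_A2P_8cycle_decomp (complete_bipartite (m + k) n)"
proof -
  let ?shift = "image (map_sum ((+) m) (id :: nat \<Rightarrow> nat))"
  have shift: "?shift ` bip_edges ({..<k} \<times> {..<n}) = bip_edges (((+) m ` {..<k}) \<times> {..<n})"
    unfolding image_map_sum_bip_edges by (simp add: map_prod_surj_on)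
  have "complete_bipartite (m + k) n = complete_bipartite m n \<union> ?shift ` complete_bipartite k n"
    unfolding complete_bipartite_eq_bip_edges shift lessThan_add_eq by (simp add: bip_edges_Un Sigma_Un_distrib1)
  moreover have "complete_bipartite m n \<inter> ?shift ` complete_bipartite k n = {}"
    unfolding complete_bipartite_eq_bip_edges shift bip_edges_Int bip_edges_empty_iff by auto
  moreover have "inj (map_sum ((+) m) (id :: nat \<Rightarrow> nat))" by (simp add: sum.inj_map)
  ultimately show ?thesis
    using assms has_A2P_8cycle_decomp_Un has_A2P_8cycle_decomp_image by metis
qed

lemma complete_bipartite_transpose:
  "image (case_sum Inr Inl) ` complete_bipartite m n = complete_bipartite n m"
proof -
  have "image (case_sum Inr Inl) ` bip_edges P = bip_edges (prod.swap ` P)" for P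
    unfolding bip_edges_def image_image by (simp add: case_prod_unfold insert_commute)
  then show ?thesis unfolding complete_bipartite_eq_bip_edges by (simp add: product_swap)
qed

lemma has_A2P_complete_bipartite_transpose:
  assumes "has_A2P_8cycle_decomp (complete_bipartite m n)"
  shows "has_A2P_8cycle_decomp (complete_bipartite n m)"
proof -
  have "inj (case_sum Inr Inl :: nat + nat \<Rightarrow> nat + nat)"
    by (rule injI) (auto split: sum.splits)
  then show ?thesis
    using has_A2P_8cycle_decomp_image[OF _ assms] complete_bipartite_transpose by metis
qed

lemma has_A2P_complete_bipartite_add_cols:
  "has_A2P_8cycle_decomp (complete_bipartite m n) \<Longrightarrow> has_A2P_8cycle_decomp (complete_bipartite m k)
    \<Longrightarrow> has_A2P_8cycle_decomp (complete_bipartite m (n + k))"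
  using has_A2P_complete_bipartite_add_rows has_A2P_complete_bipartite_transpose by blast

lemma has_A2P_complete_bipartite_mult_rows:
  "has_A2P_8cycle_decomp (complete_bipartite m n) \<Longrightarrow> has_A2P_8cycle_decomp (complete_bipartite (k * m) n)"
  by (induction k) (simp_all add: complete_bipartite_0 has_A2P_8cycle_decomp_empty has_A2P_complete_bipartite_add_rows)

lemma has_A2P_complete_bipartite_mult_cols:
  "has_A2P_8cycle_decomp (complete_bipartite m n) \<Longrightarrow> has_A2P_8cycle_decomp (complete_bipartite m (k * n))"
  using has_A2P_complete_bipartite_mult_rows has_A2P_complete_bipartite_transpose by blast

section \<open>The base graphs K(4,4) and K(4,6)\<close>

definition bip_8cycle :: "nat list \<Rightarrow> nat list \<Rightarrow> (nat + nat) set set" where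
  "bip_8cycle as bs = cycle_edges (concat (map (\<lambda>(a, b). [Inl a, Inr b]) (zip as bs)))"

lemma bip_8cycle_eq_bip_edges:
  "bip_8cycle [a0, a1, a2, a3] [b0, b1, b2, b3] =
     bip_edges {(a0, b0), (a1, b0), (a1, b1), (a2, b1), (a2, b2), (a3, b2), (a3, b3), (a0, b3)}"
proof -
  let ?vs = "[Inl a0, Inr b0, Inl a1, Inr b1, Inl a2, Inr b2, Inl a3, Inr b3]"
  have "{..<length ?vs} = {0, 1, 2, 3, 4, 5, 6, 7}" by auto
  then have "cycle_edges ?vs = (\<lambda>i. {?vs ! i, ?vs ! ((i + 1) mod length ?vs)}) ` {0, 1, 2, 3, 4, 5, 6, 7}"
    by (simp only: cycle_edges_eq_image)
  then show ?thesis by (simp add: bip_8cycle_def bip_edges_def insert_commute)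
qed

lemma is_8cycle_bip_8cycle:
  assumes "distinct [a0, a1, a2, a3]" "distinct [b0, b1, b2, b3]"
  shows "is_8cycle (bip_8cycle [a0, a1, a2, a3] [b0, b1, b2, b3])"
  unfolding is_8cycle_def bip_8cycle_def
  by (rule exI[of _ "[Inl a0, Inr b0, Inl a1, Inr b1, Inl a2, Inr b2, Inl a3, Inr b3]"]) (use assms in auto)

lemma cyc_verts_bip_8cycle:
  "cyc_verts (bip_8cycle [a0, a1, a2, a3] [b0, b1, b2, b3]) = Inl ` {a0, a1, a2, a3} \<union> Inr ` {b0, b1, b2, b3}"
  unfolding bip_8cycle_eq_bip_edges cyc_verts_def bip_edges_def by auto

lemma has_A2P_complete_bipartite_4_4: "has_A2P_8cycle_decomp (complete_bipartite 4 4)"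
proof -
  have "{..<4::nat} = {0, 1, 2, 3}" by auto
  then have "complete_bipartite 4 4 = bip_8cycle [0, 1, 2, 3] [0, 1, 2, 3] \<union> bip_8cycle [0, 3, 2, 1] [1, 0, 3, 2]"
    unfolding complete_bipartite_eq_bip_edges bip_8cycle_eq_bip_edges bip_edges_Un bip_edges_eq_iff
    by auto
  moreover have "has_A2P_8cycle_decomp (bip_8cycle [0, 1, 2, 3] [0, 1, 2, 3] \<union> bip_8cycle [0, 3, 2, 1] [1, 0, 3, 2])"
  proof (rule has_A2P_8cycle_decomp_pair)
    show "is_8cycle (bip_8cycle [0, 1, 2, 3] [0, 1, 2, 3])" "is_8cycle (bip_8cycle [0, 3, 2, 1] [1, 0, 3, 2])"
      by (rule is_8cycle_bip_8cycle; simp)+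
    show "cyc_verts (bip_8cycle [0, 1, 2, 3] [0, 1, 2, 3]) = cyc_verts (bip_8cycle [0, 3, 2, 1] [1, 0, 3, 2])"
      unfolding cyc_verts_bip_8cycle by auto
    show "bip_8cycle [0, 1, 2, 3] [0, 1, 2, 3] \<inter> bip_8cycle [0, 3, 2, 1] [1, 0, 3, 2] = {}"
      unfolding bip_8cycle_eq_bip_edges bip_edges_Int bip_edges_empty_iff by simp
  qed
  ultimately show ?thesis by simp
qed

lemma has_A2P_complete_bipartite_4_6: "has_A2P_8cycle_decomp (complete_bipartite 4 6)"
proof -
  define C1 D1 C2 D2 C3 D3 where
    "C1 = bip_8cycle [0, 3, 2, 1] [3, 2, 1, 0]" and "D1 = bip_8cycle [0, 3, 2, 1] [1, 0, 3, 2]" and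
    "C2 = bip_8cycle [0, 3, 2, 1] [1, 0, 5, 4]" and "D2 = bip_8cycle [0, 3, 2, 1] [5, 4, 1, 0]" and
    "C3 = bip_8cycle [0, 3, 2, 1] [5, 4, 3, 2]" and "D3 = bip_8cycle [0, 3, 2, 1] [3, 2, 5, 4]"
  note defs = C1_def C2_def C3_def D1_def D2_def D3_def
  have cycle: "is_8cycle C1" "is_8cycle C2" "is_8cycle C3" "is_8cycle D1" "is_8cycle D2" "is_8cycle D3"
    unfolding defs by (rule is_8cycle_bip_8cycle; simp)+
  have verts: "cyc_verts D1 = cyc_verts C1" "cyc_verts D2 = cyc_verts C2" "cyc_verts D3 = cyc_verts C3"
    unfolding defs cyc_verts_bip_8cycle by auto
  note edges = defs[unfolded bip_8cycle_eq_bip_edges]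
  have disjoint:
    "C1 \<inter> (C2 \<union> C3) = {}" "C2 \<inter> C3 = {}" "D1 \<inter> (D2 \<union> D3) = {}" "D2 \<inter> D3 = {}"
    "C1 \<inter> D1 = {}" "C2 \<inter> D2 = {}" "C3 \<inter> D3 = {}"
    unfolding edges bip_edges_Un bip_edges_Int bip_edges_empty_iff by simp_all
  have distinct: "C1 \<noteq> C2" "C1 \<noteq> C3" "C2 \<noteq> C3" "D1 \<noteq> D2" "D1 \<noteq> D3" "D2 \<noteq> D3"
    using disjoint cycle[THEN is_8cycle_nonempty] by auto
  have "{..<4::nat} = {0, 1, 2, 3}" "{..<6::nat} = {0, 1, 2, 3, 4, 5}" by auto
  then have K: "complete_bipartite 4 6 = C1 \<union> (C2 \<union> C3)" "complete_bipartite 4 6 = D1 \<union> (D2 \<union> D3)"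
    unfolding complete_bipartite_eq_bip_edges edges bip_edges_Un bip_edges_eq_iff by auto
  define f where "f C = (if C = C1 then D1 else if C = C2 then D2 else D3)" for C
  have "is_8cycle_decomp (complete_bipartite 4 6) {C1, C2, C3}"
    unfolding K(1) using cycle disjoint
    by (intro is_8cycle_decomp_insert is_8cycle_decomp_singleton)
  moreover have "is_8cycle_decomp (complete_bipartite 4 6) {D1, D2, D3}"
    unfolding K(2) using cycle disjoint
    by (intro is_8cycle_decomp_insert is_8cycle_decomp_singleton)
  moreover have "f ` {C1, C2, C3} = {D1, D2, D3}" "inj_on f {C1, C2, C3}"
    using distinct by (auto simp: f_def)
  moreover have "\<forall>C\<in>{C1, C2, C3}. inside_8cycle C (f C)"
    using distinct cycle verts disjoint unfolding inside_8cycle_def f_def by auto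
  ultimately show ?thesis
    unfolding has_A2P_8cycle_decomp_def is_A2P_8cycle_decomp_iff by metis
qed

theorem lemma2p2:
  fixes t s :: nat
  assumes "t \<ge> 1" and "s \<ge> 1"
  shows "\<exists>\<C>. is_A2P_8cycle_decomp (complete_bipartite (4 * t) (4 * s + 2)) \<C>"
proof -
  obtain r where r: "s = Suc r" using assms(2) by (cases s) auto
  have "has_A2P_8cycle_decomp (complete_bipartite 4 (6 + r * 4))"
    using has_A2P_complete_bipartite_add_cols[OF has_A2P_complete_bipartite_4_6
        has_A2P_complete_bipartite_mult_cols[OF has_A2P_complete_bipartite_4_4]] .
  then have "has_A2P_8cycle_decomp (complete_bipartite (t * 4) (6 + r * 4))"
    by (rule has_A2P_complete_bipartite_mult_rows)
  moreover have "t * 4 = 4 * t" "6 + r * 4 = 4 * s + 2" using r by simp_all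
  ultimately show ?thesis unfolding has_A2P_8cycle_decomp_def by simp
qed

end
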